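(* Let $n\ge 5$ and let $f$ be an RDF of $P(n,2)$ of weight $\gamma_R(P(n,2))$ with $|V_2|$ minimum among all such minimum-weight RDFs. For any index $i$, if $r_f(V'(i,7)) \le 0.5$, then $v_{i+3}\notin V_2$.
   Context: For integers $n \ge 3$ and $1 \le k < n/2$, the generalized Petersen graph $P(n,k)$ has vertex set $\{v_i, u_i : 0 \le i \le n-1\}$ and edge set $\{v_iv_{i+1},\ v_iu_i,\ u_iu_{i+k} : 0 \le i \le n-1\}$, with subscripts taken modulo $n$. A Roman domination function (RDF) of a graph $G$ is a function $f: V(G)\to\{0,1,2\}$ such that every vertex $u$ with $f(u)=0$ is adjacent to at least one vertex $v$ with $f(v)=2$. Its weight is $\sum_{u\in V(G)} f(u)$; $\gamma_R(G)$ is the minimum weight of an RDF of $G$. For an RDF $f$ write $V_i=\{w: f(w)=i\}$, $i=0,1,2$. Define $g_f(w)=0.5$ if $w\in V_2$, $g_f(w)=1$ if $w\in V_1$, and $g_f(w)=0.5\,|N(w)\cap V_2|$ if $w\in V_0$, where $N(w)$ is the set of neighbors of $w$. Let $r_f(w)=g_f(w)-0.5$ and, for $S\subseteq V(P(n,2))$, $r_f(S)=\sum_{w\in S} r_f(w)$. For an integer $i$ and $t\ge 1$, $V'(i,t)=\{v_j,u_j : i\le j\le i+t-1\}$ (subscripts modulo $n$). *)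

theory Defs
  imports Complex_Main
begin

text \<open>Vertices of the generalized Petersen graph: outer vertices v_i and inner vertices u_i.\<close>
datatype gpv = Vo nat | Ui nat

definition gp_verts :: "nat \<Rightarrow> gpv set" where
  "gp_verts n = {Vo i | i. i < n} \<union> {Ui i | i. i < n}"

definition gp_edge :: "nat \<Rightarrow> nat \<Rightarrow> gpv \<Rightarrow> gpv \<Rightarrow> bool" where
  "gp_edge n k x y \<longleftrightarrow> (\<exists>i<n.
      (x = Vo i \<and> y = Vo ((i + 1) mod n)) \<or>
      (x = Vo i \<and> y = Ui i) \<or>
      (x = Ui i \<and> y = Ui ((i + k) mod n)))"

definition gp_adj :: "nat \<Rightarrow> nat \<Rightarrow> gpv \<Rightarrow> gpv \<Rightarrow> bool" where
  "gp_adj n k x y \<longleftrightarrow> gp_edge n k x y \<or> gp_edge n k y x"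

definition gp_nbhd :: "nat \<Rightarrow> nat \<Rightarrow> gpv \<Rightarrow> gpv set" where
  "gp_nbhd n k w = {y \<in> gp_verts n. gp_adj n k w y}"

definition is_RDF :: "nat \<Rightarrow> nat \<Rightarrow> (gpv \<Rightarrow> nat) \<Rightarrow> bool" where
  "is_RDF n k f \<longleftrightarrow> (\<forall>w\<in>gp_verts n. f w \<in> {0,1,2}) \<and>
     (\<forall>w\<in>gp_verts n. f w = 0 \<longrightarrow> (\<exists>y\<in>gp_verts n. gp_adj n k w y \<and> f y = 2))"

definition rdf_weight :: "nat \<Rightarrow> (gpv \<Rightarrow> nat) \<Rightarrow> nat" where
  "rdf_weight n f = (\<Sum>w\<in>gp_verts n. f w)"

definition gammaR :: "nat \<Rightarrow> nat \<Rightarrow> nat" where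
  "gammaR n k = (LEAST m. \<exists>f. is_RDF n k f \<and> rdf_weight n f = m)"

definition Vset :: "nat \<Rightarrow> (gpv \<Rightarrow> nat) \<Rightarrow> nat \<Rightarrow> gpv set" where
  "Vset n f j = {w \<in> gp_verts n. f w = j}"

definition g_f :: "nat \<Rightarrow> nat \<Rightarrow> (gpv \<Rightarrow> nat) \<Rightarrow> gpv \<Rightarrow> real" where
  "g_f n k f w = (if f w = 2 then 0.5 else if f w = 1 then 1
                  else 0.5 * real (card (gp_nbhd n k w \<inter> Vset n f 2)))"

definition r_f :: "nat \<Rightarrow> nat \<Rightarrow> (gpv \<Rightarrow> nat) \<Rightarrow> gpv \<Rightarrow> real" where
  "r_f n k f w = g_f n k f w - 0.5"

definition r_f_set :: "nat \<Rightarrow> nat \<Rightarrow> (gpv \<Rightarrow> nat) \<Rightarrow> gpv set \<Rightarrow> real" where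
  "r_f_set n k f S = (\<Sum>w\<in>S. r_f n k f w)"

definition Vprime :: "nat \<Rightarrow> int \<Rightarrow> nat \<Rightarrow> gpv set" where
  "Vprime n i t = {Vo (nat ((i + int j) mod int n)) | j. j < t} \<union>
                  {Ui (nat ((i + int j) mod int n)) | j. j < t}"

end

theory Submission
  imports Defs
begin

(* Suppose f(v_{i+3}) = 2 and write v_k, u_k for the
   vertices at offset k from the centre i+3.  Since f is a minimum RDF with |V_2| minimum, no
   neighbour of a V_2 vertex carries 1 or 2; hence v_{-1}, v_1, u_0 carry 0.  A zero vertex with
   m neighbours in V_2 has r_f-value (m-1)/2, so every extra V_2 neighbour costs 1/2 inside the
   window V'(i,7) = {v_k, u_k : |k| <= 3}, whose total r_f-value is at most 1/2 by hypothesis.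
   First, u_{-1} (and symmetrically u_1) cannot be in V_2: that already gives v_{-1} two V_2
   neighbours, and a short case analysis on v_{-2} always produces a second vertex of value 1/2.
   Next, each side d = +1/-1 either contributes 1/2 through v_d, v_{2d}, u_d or forces
   f(u_{2d}) = 2; in the latter case u_0 gains a further V_2 neighbour.  Summing over both sides
   and u_0 gives total r_f-value >= 1 in the window, a contradiction. *)

definition vo :: "nat \<Rightarrow> int \<Rightarrow> gpv" where
  "vo n a = Vo (nat (a mod int n))"

definition ui :: "nat \<Rightarrow> int \<Rightarrow> gpv" where
  "ui n a = Ui (nat (a mod int n))"

lemma vo_neq_ui [simp]: "vo n a \<noteq> ui n b" "ui n b \<noteq> vo n a"
  by (simp_all add: vo_def ui_def)

lemma vo_eq_iff: "0 < n \<Longrightarrow> vo n a = vo n b \<longleftrightarrow> a mod int n = b mod int n"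
  by (simp add: vo_def eq_nat_nat_iff)

lemma ui_eq_iff: "0 < n \<Longrightarrow> ui n a = ui n b \<longleftrightarrow> a mod int n = b mod int n"
  by (simp add: ui_def eq_nat_nat_iff)

lemma vo_shift: "0 < n \<Longrightarrow> vo n a = vo n b \<Longrightarrow> vo n (a + t) = vo n (b + t)"
  by (auto simp: vo_eq_iff intro: mod_add_cong)

lemma ui_shift: "0 < n \<Longrightarrow> ui n a = ui n b \<Longrightarrow> ui n (a + t) = ui n (b + t)"
  by (auto simp: ui_eq_iff intro: mod_add_cong)

lemma vo_of_nat: "vo n (int m) = Vo (m mod n)"
  by (simp add: vo_def flip: of_nat_mod)

lemma ui_of_nat: "ui n (int m) = Ui (m mod n)"
  by (simp add: ui_def flip: of_nat_mod)

lemma gp_verts_coords: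
  assumes "0 < n"
  shows "gp_verts n = range (vo n) \<union> range (ui n)"
proof -
  have "Vo j \<in> range (vo n) \<and> Ui j \<in> range (ui n)" if "j < n" for j
    using that vo_of_nat[of n j] ui_of_nat[of n j] by (metis mod_less rangeI)
  moreover have "vo n a \<in> gp_verts n \<and> ui n a \<in> gp_verts n" for a
    using \<open>0 < n\<close> by (auto simp: gp_verts_def vo_def ui_def nat_less_iff)
  ultimately show ?thesis unfolding gp_verts_def by blast
qed

lemma gp_edge_coords:
  assumes "0 < n"
  shows "gp_edge n s x y \<longleftrightarrow>
    (\<exists>b. (x = vo n b \<and> y = vo n (b + 1)) \<or> (x = vo n b \<and> y = ui n b) \<or>
         (x = ui n b \<and> y = ui n (b + int s)))"
proof
  assume "gp_edge n s x y"
  then obtain j where "j < n" and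
    "(x = Vo j \<and> y = Vo ((j + 1) mod n)) \<or> (x = Vo j \<and> y = Ui j) \<or>
     (x = Ui j \<and> y = Ui ((j + s) mod n))"
    unfolding gp_edge_def by blast
  then show "\<exists>b. (x = vo n b \<and> y = vo n (b + 1)) \<or> (x = vo n b \<and> y = ui n b) \<or>
                (x = ui n b \<and> y = ui n (b + int s))"
    using vo_of_nat[of n j] vo_of_nat[of n "j + 1"] ui_of_nat[of n j] ui_of_nat[of n "j + s"]
    by (intro exI[of _ "int j"]) (auto simp: add.commute)
next
  assume "\<exists>b. (x = vo n b \<and> y = vo n (b + 1)) \<or> (x = vo n b \<and> y = ui n b) \<or>
              (x = ui n b \<and> y = ui n (b + int s))"
  then obtain b where b: "(x = vo n b \<and> y = vo n (b + 1)) \<or> (x = vo n b \<and> y = ui n b) \<or>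
                          (x = ui n b \<and> y = ui n (b + int s))" by blast
  define j where "j = nat (b mod int n)"
  have "j < n" and bj: "b mod int n = int j"
    using assms by (simp_all add: j_def nat_less_iff)
  have vb: "vo n b = vo n (int j)" and ub: "ui n b = ui n (int j)"
    using assms bj \<open>j < n\<close> by (simp_all add: vo_eq_iff ui_eq_iff flip: of_nat_mod)
  have "vo n (b + 1) = vo n (int (j + 1))"
    using vo_shift[OF assms vb, of 1] by (simp add: add.commute)
  moreover have "ui n (b + int s) = ui n (int (j + s))"
    using ui_shift[OF assms ub, of "int s"] by simp
  ultimately have "vo n b = Vo j" "ui n b = Ui j" "vo n (b + 1) = Vo ((j + 1) mod n)"
      "ui n (b + int s) = Ui ((j + s) mod n)"
    using vb ub \<open>j < n\<close> by (simp_all only: vo_of_nat ui_of_nat mod_less)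
  then show "gp_edge n s x y"
    unfolding gp_edge_def using b \<open>j < n\<close> by auto
qed

lemma gp_adj_sym: "gp_adj n s x y \<longleftrightarrow> gp_adj n s y x"
  unfolding gp_adj_def by blast

lemma adj_vo:
  assumes "0 < n"
  shows "gp_adj n s (vo n a) y \<longleftrightarrow> y = vo n (a + 1) \<or> y = vo n (a - 1) \<or> y = ui n a"
proof
  assume "gp_adj n s (vo n a) y"
  then obtain b where
    "(vo n a = vo n b \<and> y = vo n (b + 1)) \<or> (vo n a = vo n b \<and> y = ui n b) \<or>
     (y = vo n b \<and> vo n a = vo n (b + 1))"
    unfolding gp_adj_def gp_edge_coords[OF assms] by auto
  then show "y = vo n (a + 1) \<or> y = vo n (a - 1) \<or> y = ui n a"
    using vo_shift[OF assms, of a b 1] vo_shift[OF assms, of a "b + 1" "-1"]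
      ui_eq_iff[OF assms] vo_eq_iff[OF assms] by auto
next
  assume "y = vo n (a + 1) \<or> y = vo n (a - 1) \<or> y = ui n a"
  then show "gp_adj n s (vo n a) y"
    unfolding gp_adj_def gp_edge_coords[OF assms] by (metis diff_add_cancel)
qed

lemma adj_ui:
  assumes "0 < n"
  shows "gp_adj n s (ui n a) y \<longleftrightarrow> y = ui n (a + s) \<or> y = ui n (a - s) \<or> y = vo n a"
proof
  assume "gp_adj n s (ui n a) y"
  then obtain b where
    "(ui n a = ui n b \<and> y = ui n (b + s)) \<or> (y = vo n b \<and> ui n a = ui n b) \<or>
     (y = ui n b \<and> ui n a = ui n (b + s))"
    unfolding gp_adj_def gp_edge_coords[OF assms] by auto
  then show "y = ui n (a + s) \<or> y = ui n (a - s) \<or> y = vo n a"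
    using ui_shift[OF assms, of a b s] ui_shift[OF assms, of a "b + s" "- s"]
      ui_eq_iff[OF assms] vo_eq_iff[OF assms] by auto
next
  assume "y = ui n (a + s) \<or> y = ui n (a - s) \<or> y = vo n a"
  then show "gp_adj n s (ui n a) y"
    unfolding gp_adj_def gp_edge_coords[OF assms] by (metis diff_add_cancel)
qed

lemma gp_degree_le_3:
  assumes "0 < n" and "w \<in> gp_verts n"
  shows "card (gp_nbhd n s w) \<le> 3"
proof -
  obtain a where "w = vo n a \<or> w = ui n a"
    using assms gp_verts_coords by blast
  then obtain p q r where "gp_nbhd n s w \<subseteq> {p, q, r}"
    unfolding gp_nbhd_def using adj_vo[OF assms(1)] adj_ui[OF assms(1)] by blast
  then have "card (gp_nbhd n s w) \<le> card {p, q, r}"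
    by (intro card_mono) auto
  also have "\<dots> \<le> 3"
    by (simp add: card_insert_if)
  finally show ?thesis .
qed

lemma mod_eq_close_imp_eq:
  fixes a b :: int
  assumes "a mod m = b mod m" and "\<bar>a - b\<bar> < m"
  shows "a = b"
proof -
  have "m dvd a - b"
    using assms(1) by (simp add: mod_eq_dvd_iff)
  then show ?thesis
    using assms(2) dvd_imp_le_int[of "a - b" m] by force
qed

lemma vo_inj: "\<bar>a - b\<bar> < int n \<Longrightarrow> vo n a = vo n b \<longleftrightarrow> a = b"
  by (auto simp: vo_eq_iff intro: mod_eq_close_imp_eq)

lemma ui_inj: "\<bar>a - b\<bar> < int n \<Longrightarrow> ui n a = ui n b \<longleftrightarrow> a = b"
  by (auto simp: ui_eq_iff intro: mod_eq_close_imp_eq)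

lemma vo_in_Vprime: "0 \<le> j \<Longrightarrow> j < int t \<Longrightarrow> vo n (i + j) \<in> Vprime n i t"
  unfolding Vprime_def vo_def by (intro UnI1 CollectI exI[of _ "nat j"]) simp

lemma ui_in_Vprime: "0 \<le> j \<Longrightarrow> j < int t \<Longrightarrow> ui n (i + j) \<in> Vprime n i t"
  unfolding Vprime_def ui_def by (intro UnI2 CollectI exI[of _ "nat j"]) simp

lemma Vprime_subset: "0 < n \<Longrightarrow> Vprime n i t \<subseteq> gp_verts n"
  unfolding Vprime_def gp_verts_def by (auto simp: nat_less_iff)

definition min_V2_RDF :: "nat \<Rightarrow> nat \<Rightarrow> (gpv \<Rightarrow> nat) \<Rightarrow> bool" where
  "min_V2_RDF n k f \<longleftrightarrow> is_RDF n k f \<and> rdf_weight n f = gammaR n k \<and>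
     (\<forall>g. is_RDF n k g \<and> rdf_weight n g = gammaR n k \<longrightarrow>
          card (Vset n f 2) \<le> card (Vset n g 2))"

lemma finite_gp_verts: "finite (gp_verts n)"
proof -
  have "gp_verts n = Vo ` {..<n} \<union> Ui ` {..<n}"
    unfolding gp_verts_def by auto
  then show ?thesis by simp
qed

lemma gammaR_le: "is_RDF n k g \<Longrightarrow> gammaR n k \<le> rdf_weight n g"
  unfolding gammaR_def by (rule Least_le) auto

lemma rdf_weight_update:
  assumes "y \<in> gp_verts n"
  shows "rdf_weight n (f(y := v)) + f y = rdf_weight n f + v"
proof -
  have "(\<Sum>w\<in>gp_verts n - {y}. (f(y := v)) w) = (\<Sum>w\<in>gp_verts n - {y}. f w)"
    by (rule sum.cong) auto
  then show ?thesis
    unfolding rdf_weight_def sum.remove[OF finite_gp_verts assms] by simp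
qed

lemma rdf_weight_add_indicator:
  assumes "P \<subseteq> gp_verts n"
  shows "rdf_weight n (\<lambda>w. f w + (if w \<in> P then 1 else 0)) = rdf_weight n f + card P"
proof -
  have "{w \<in> gp_verts n. w \<in> P} = P"
    using assms by auto
  then have "(\<Sum>w\<in>gp_verts n. if w \<in> P then 1 else 0) = card P"
    using sum.inter_filter[OF finite_gp_verts, where g = "\<lambda>_. 1::nat" and P = "\<lambda>w. w \<in> P"]
    by (metis card_eq_sum)
  then show ?thesis
    unfolding rdf_weight_def by (simp add: sum.distrib)
qed

text \<open>In a minimum RDF no vertex of value 1 is adjacent to a vertex of value 2: its value could be
  lowered to 0.\<close>

lemma min_RDF_no_one_next_to_two:
  assumes rdf: "is_RDF n k f" and wt: "rdf_weight n f = gammaR n k"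
    and x: "x \<in> gp_verts n" "f x = 2" and y: "y \<in> gp_verts n" "gp_adj n k x y"
  shows "f y \<noteq> 1"
proof
  assume "f y = 1"
  have "is_RDF n k (f(y := 0))"
    unfolding is_RDF_def
  proof (intro conjI ballI impI)
    fix w assume "w \<in> gp_verts n"
    then show "(f(y := 0)) w \<in> {0, 1, 2}"
      using rdf unfolding is_RDF_def by auto
  next
    fix w assume w: "w \<in> gp_verts n" "(f(y := 0)) w = 0"
    show "\<exists>z\<in>gp_verts n. gp_adj n k w z \<and> (f(y := 0)) z = 2"
    proof (cases "w = y")
      case True
      then show ?thesis
        using x y \<open>f y = 1\<close> gp_adj_sym by (intro bexI[of _ x]) auto
    next
      case False
      then obtain z where "z \<in> gp_verts n" "gp_adj n k w z" "f z = 2"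
        using rdf w unfolding is_RDF_def by auto
      then show ?thesis
        using \<open>f y = 1\<close> by (intro bexI[of _ z]) auto
    qed
  qed
  then have "rdf_weight n f \<le> rdf_weight n (f(y := 0))"
    using gammaR_le wt by metis
  then show False
    using rdf_weight_update[OF y(1), of f 0] \<open>f y = 1\<close> by simp
qed

text \<open>If in addition |V_2| is minimum, no two distinct V_2 vertices are adjacent: otherwise lower
  x from 2 to 0 and raise its (at most two) other zero neighbours to 1, which keeps the weight
  minimum but shrinks V_2.\<close>

lemma min_V2_RDF_no_two_next_to_two:
  assumes n: "0 < n" and min: "min_V2_RDF n k f"
    and x: "x \<in> gp_verts n" "f x = 2" and y: "y \<in> gp_verts n" "gp_adj n k x y" "y \<noteq> x"
  shows "f y \<noteq> 2"
proof
  assume "f y = 2"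
  have rdf: "is_RDF n k f" and wt: "rdf_weight n f = gammaR n k"
    using min unfolding min_V2_RDF_def by auto
  define N where "N = gp_nbhd n k x"
  define P where "P = {w \<in> N. f w = 0}"
  define g where "g = (\<lambda>w. (f(x := 0)) w + (if w \<in> P then 1 else 0))"
  have P_verts: "P \<subseteq> gp_verts n" and "x \<notin> P"
    using x unfolding P_def N_def gp_nbhd_def by auto
  have g_P: "w \<in> P \<Longrightarrow> g w = 1" and g_other: "w \<notin> P \<Longrightarrow> g w = (f(x := 0)) w" for w
    unfolding g_def P_def by auto
  have "P \<subseteq> N - {y}"
    using \<open>f y = 2\<close> unfolding P_def by auto
  moreover have "card (N - {y}) \<le> 2"
  proof -
    have "y \<in> N" and "finite N"
      using y finite_gp_verts unfolding N_def gp_nbhd_def by auto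
    then show ?thesis
      using gp_degree_le_3[OF n x(1), of k] by (simp add: N_def)
  qed
  moreover have "finite (N - {y})"
    using finite_gp_verts unfolding N_def gp_nbhd_def by simp
  ultimately have "card P \<le> 2"
    by (meson card_mono le_trans)
  have weight_g: "rdf_weight n g + 2 = rdf_weight n f + card P"
    using rdf_weight_add_indicator[OF P_verts, of "f(x := 0)"] rdf_weight_update[OF x(1), of f 0] x(2)
    unfolding g_def by simp
  have "is_RDF n k g"
    unfolding is_RDF_def
  proof (intro conjI ballI impI)
    fix w assume "w \<in> gp_verts n"
    then show "g w \<in> {0, 1, 2}"
      using rdf g_P g_other unfolding is_RDF_def by (cases "w \<in> P") auto
  next
    fix w assume w: "w \<in> gp_verts n" "g w = 0"
    then have "w \<notin> P" using g_P by fastforce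
    show "\<exists>z\<in>gp_verts n. gp_adj n k w z \<and> g z = 2"
    proof (cases "w = x")
      case True
      then show ?thesis
        using y \<open>f y = 2\<close> g_other[of y] \<open>P \<subseteq> N - {y}\<close> by (intro bexI[of _ y]) auto
    next
      case False
      then have "f w = 0" and "w \<notin> N"
        using w \<open>w \<notin> P\<close> g_other unfolding P_def by auto
      then obtain z where z: "z \<in> gp_verts n" "gp_adj n k w z" "f z = 2"
        using rdf w(1) unfolding is_RDF_def by auto
      then have "z \<noteq> x"
        using \<open>w \<notin> N\<close> w(1) gp_adj_sym unfolding N_def gp_nbhd_def by blast
      then show ?thesis
        using z g_other[of z] unfolding P_def by (intro bexI[of _ z]) auto
    qed
  qed
  then have "rdf_weight n g = gammaR n k"
    using gammaR_le[of n k g] weight_g \<open>card P \<le> 2\<close> wt by simp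
  then have "card (Vset n f 2) \<le> card (Vset n g 2)"
    using min \<open>is_RDF n k g\<close> unfolding min_V2_RDF_def by blast
  moreover have "Vset n g 2 = Vset n f 2 - {x}"
    unfolding Vset_def g_def P_def by auto
  moreover have "x \<in> Vset n f 2" and "finite (Vset n f 2)"
    using x finite_gp_verts unfolding Vset_def by auto
  ultimately show False
    by (metis card_Diff1_less not_le)
qed

lemma min_V2_RDF_nbr_of_two:
  assumes "0 < n" and min: "min_V2_RDF n k f"
    and "x \<in> gp_verts n" "f x = 2" and y: "y \<in> gp_verts n" "gp_adj n k x y" "y \<noteq> x"
  shows "f y = 0"
proof -
  have rdf: "is_RDF n k f" and "rdf_weight n f = gammaR n k"
    using min unfolding min_V2_RDF_def by auto
  then have "f y \<noteq> 1"
    using min_RDF_no_one_next_to_two assms by blast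
  moreover have "f y \<noteq> 2"
    using min_V2_RDF_no_two_next_to_two assms by blast
  moreover have "f y \<in> {0, 1, 2}"
    using rdf y(1) unfolding is_RDF_def by blast
  ultimately show ?thesis by blast
qed

lemma r_f_lower_bound:
  assumes "f w = 0" and "B \<subseteq> gp_nbhd n k w \<inter> Vset n f 2"
  shows "(real (card B) - 1) / 2 \<le> r_f n k f w"
proof -
  have "finite (gp_nbhd n k w \<inter> Vset n f 2)"
    using finite_gp_verts unfolding gp_nbhd_def by simp
  then have "card B \<le> card (gp_nbhd n k w \<inter> Vset n f 2)"
    using assms(2) by (rule card_mono)
  then show ?thesis
    using assms(1) unfolding r_f_def g_f_def by simp
qed

lemma r_f_two_nbrs:
  assumes "f w = 0" and "a \<noteq> b" and "a \<in> gp_verts n" "b \<in> gp_verts n"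
    and "gp_adj n k w a" "gp_adj n k w b" and "f a = 2" "f b = 2"
  shows "1/2 \<le> r_f n k f w"
  using r_f_lower_bound[of f w "{a, b}" n k] assms by (simp add: gp_nbhd_def Vset_def)

lemma r_f_three_nbrs:
  assumes "f w = 0" and "a \<noteq> b" "a \<noteq> c" "b \<noteq> c"
    and "a \<in> gp_verts n" "b \<in> gp_verts n" "c \<in> gp_verts n"
    and "gp_adj n k w a" "gp_adj n k w b" "gp_adj n k w c" and "f a = 2" "f b = 2" "f c = 2"
  shows "1 \<le> r_f n k f w"
  using r_f_lower_bound[of f w "{a, b, c}" n k] assms by (simp add: gp_nbhd_def Vset_def)

lemma r_f_one: "f w = 1 \<Longrightarrow> r_f n k f w = 1/2"
  unfolding r_f_def g_f_def by simp

lemma r_f_nonneg: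
  assumes rdf: "is_RDF n k f" and w: "w \<in> gp_verts n"
  shows "0 \<le> r_f n k f w"
proof (cases "f w = 0")
  case True
  then obtain y where "y \<in> gp_verts n" "gp_adj n k w y" "f y = 2"
    using rdf w unfolding is_RDF_def by blast
  then show ?thesis
    using r_f_lower_bound[of f w "{y}" n k] True by (simp add: gp_nbhd_def Vset_def)
qed (use rdf w in \<open>auto simp: is_RDF_def r_f_def g_f_def\<close>)

lemma r_f_set_mono:
  assumes "is_RDF n k f" and "A \<subseteq> B" "B \<subseteq> gp_verts n"
  shows "r_f_set n k f A \<le> r_f_set n k f B"
  unfolding r_f_set_def
  using assms r_f_nonneg finite_subset[OF assms(3) finite_gp_verts]
  by (intro sum_mono2) auto

text \<open>The local configuration of the proof: a minimum RDF with |V_2| minimum, a centre c with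
  f(v_c) = 2, and the window around c of total r_f-value at most 1/2. Vertices are addressed
  relative to the centre with an orientation d = 1 or d = -1, so that one argument serves both
  sides.\<close>

locale centred_window =
  fixes n :: nat and f :: "gpv \<Rightarrow> nat" and c :: int
  assumes n_ge_5: "5 \<le> n"
    and minimal: "min_V2_RDF n 2 f"
    and centre_two: "f (vo n c) = 2"
    and window_le: "r_f_set n 2 f (Vprime n (c - 3) 7) \<le> 1/2"
begin

definition V :: "int \<Rightarrow> int \<Rightarrow> gpv" where
  "V d k = vo n (c + d * k)"

definition U :: "int \<Rightarrow> int \<Rightarrow> gpv" where
  "U d k = ui n (c + d * k)"

abbreviation R :: "gpv \<Rightarrow> real" where
  "R \<equiv> r_f n 2 f"

abbreviation W :: "gpv set" where
  "W \<equiv> Vprime n (c - 3) 7"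

lemma n_pos: "0 < n"
  using n_ge_5 by simp

lemma rdf: "is_RDF n 2 f"
  using minimal unfolding min_V2_RDF_def by simp

lemma V_vert [simp]: "V d k \<in> gp_verts n" and U_vert [simp]: "U d k \<in> gp_verts n"
  using gp_verts_coords[OF n_pos] by (auto simp: V_def U_def)

lemma V_neq_U [simp]: "V d k \<noteq> U e l" "U e l \<noteq> V d k"
  by (simp_all add: V_def U_def)

lemma V_reflect: "V (- d) k = V d (- k)" and U_reflect: "U (- d) k = U d (- k)"
  by (simp_all add: V_def U_def)

lemma f_centre: "f (V d 0) = 2"
  using centre_two by (simp add: V_def)

lemma orientation_cases: "\<bar>d :: int\<bar> = 1 \<Longrightarrow> d = 1 \<or> d = - 1"
  by linarith

lemma V_eq_iff: "\<bar>d\<bar> = 1 \<Longrightarrow> \<bar>k - l\<bar> \<le> 4 \<Longrightarrow> V d k = V d l \<longleftrightarrow> k = l"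
  using n_ge_5 vo_inj[of "c + d * k" "c + d * l" n] by (auto simp: V_def abs_if split: if_splits)

lemma U_eq_iff: "\<bar>d\<bar> = 1 \<Longrightarrow> \<bar>k - l\<bar> \<le> 4 \<Longrightarrow> U d k = U d l \<longleftrightarrow> k = l"
  using n_ge_5 ui_inj[of "c + d * k" "c + d * l" n] by (auto simp: U_def abs_if split: if_splits)

lemma adj_V:
  "\<bar>d\<bar> = 1 \<Longrightarrow> gp_adj n 2 (V d k) y \<longleftrightarrow> y = V d (k + 1) \<or> y = V d (k - 1) \<or> y = U d k"
  using orientation_cases[of d] by (auto simp: V_def U_def adj_vo[OF n_pos] algebra_simps)

lemma adj_U:
  "\<bar>d\<bar> = 1 \<Longrightarrow> gp_adj n 2 (U d k) y \<longleftrightarrow> y = U d (k + 2) \<or> y = U d (k - 2) \<or> y = V d k"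
  using orientation_cases[of d] by (auto simp: V_def U_def adj_ui[OF n_pos] algebra_simps)

lemma V_in_window: "\<bar>d\<bar> = 1 \<Longrightarrow> \<bar>k\<bar> \<le> 3 \<Longrightarrow> V d k \<in> W"
  using vo_in_Vprime[of "d * k + 3" 7 n "c - 3"] orientation_cases[of d] by (auto simp: V_def)

lemma U_in_window: "\<bar>d\<bar> = 1 \<Longrightarrow> \<bar>k\<bar> \<le> 3 \<Longrightarrow> U d k \<in> W"
  using ui_in_Vprime[of "d * k + 3" 7 n "c - 3"] orientation_cases[of d] by (auto simp: U_def)

lemma R_nonneg: "w \<in> gp_verts n \<Longrightarrow> 0 \<le> R w"
  using r_f_nonneg[OF rdf] by blast

lemma window_sum_le: "B \<subseteq> W \<Longrightarrow> sum R B \<le> 1/2"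
  using r_f_set_mono[OF rdf _ Vprime_subset[OF n_pos]] window_le
  unfolding r_f_set_def by (meson order_trans)

lemma window_single: "a \<in> W \<Longrightarrow> R a \<le> 1/2"
  using window_sum_le[of "{a}"] by simp

lemma window_pair: "a \<in> W \<Longrightarrow> b \<in> W \<Longrightarrow> a \<noteq> b \<Longrightarrow> R a + R b \<le> 1/2"
  using window_sum_le[of "{a, b}"] by simp

lemma nbr_of_two:
  "x \<in> gp_verts n \<Longrightarrow> f x = 2 \<Longrightarrow> y \<in> gp_verts n \<Longrightarrow> gp_adj n 2 x y \<Longrightarrow> y \<noteq> x \<Longrightarrow> f y = 0"
  using min_V2_RDF_nbr_of_two[OF n_pos minimal] by blast

lemma dominated: "w \<in> gp_verts n \<Longrightarrow> f w = 0 \<Longrightarrow> \<exists>y. gp_adj n 2 w y \<and> f y = 2"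
  using rdf unfolding is_RDF_def by blast

lemma f_vals: "w \<in> gp_verts n \<Longrightarrow> f w = 0 \<or> f w = 1 \<or> f w = 2"
  using rdf unfolding is_RDF_def by blast

lemma centre_nbrs:
  assumes d: "\<bar>d\<bar> = 1"
  shows "f (V d 1) = 0" and "f (U d 0) = 0"
  using d nbr_of_two[OF V_vert[of d 0] f_centre[of d]] by (simp_all add: adj_V V_eq_iff)

lemma outer_dominator:
  assumes d: "\<bar>d\<bar> = 1" and "f (V d 2) = 0" and "f (U d 2) \<noteq> 2"
  shows "f (V d 3) = 2"
proof -
  obtain y where "gp_adj n 2 (V d 2) y" "f y = 2"
    using dominated[OF V_vert assms(2)] by blast
  then show ?thesis
    using assms centre_nbrs[OF d] by (auto simp: adj_V[OF d])
qed

text \<open>u_{-d} is not in V_2: then v_{-d} already has r_f-value 1/2, and each possible value of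
  v_{-2d} yields further r_f-value in the window.\<close>

lemma inner_U_not_two:
  assumes d: "\<bar>d\<bar> = 1"
  shows "f (U d (-1)) \<noteq> 2"
proof
  assume U_two: "f (U d (-1)) = 2"
  have d': "\<bar>- d\<bar> = 1" using d by simp
  have V_zero: "f (V d (-1)) = 0"
    using centre_nbrs(1)[OF d'] by (simp add: V_reflect)
  have U_zero: "f (U d 0) = 0"
    using centre_nbrs(2)[OF d] .
  have R_V: "1/2 \<le> R (V d (-1))"
    using r_f_two_nbrs[of f "V d (-1)" "V d 0" "U d (-1)"] V_zero f_centre U_two d
    by (simp add: adj_V)
  consider "f (V d (-2)) = 1" | "f (V d (-2)) = 2" | "f (V d (-2)) = 0" "f (U d (-2)) = 2"
    | "f (V d (-2)) = 0" "f (U d (-2)) \<noteq> 2"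
    using f_vals[OF V_vert[of d "-2"]] by auto
  then show False
  proof cases
    case 1
    then show False
      using window_pair[OF V_in_window V_in_window, of d "-1" d "-2"] R_V r_f_one d
      by (simp add: V_eq_iff)
  next
    case 2
    then have "1 \<le> R (V d (-1))"
      using r_f_three_nbrs[of f "V d (-1)" "V d 0" "V d (-2)" "U d (-1)"] V_zero f_centre U_two d
      by (simp add: adj_V V_eq_iff)
    then show False
      using window_single[OF V_in_window, of d "-1"] d by simp
  next
    case 3
    then have "1/2 \<le> R (U d 0)"
      using r_f_two_nbrs[of f "U d 0" "V d 0" "U d (-2)"] U_zero f_centre d
      by (simp add: adj_U)
    then show False
      using window_pair[OF V_in_window U_in_window, of d "-1" d 0] R_V d by simp
  next
    case 4
    then have "f (V (- d) 3) = 2"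
      using outer_dominator[OF d'] by (simp add: V_reflect U_reflect)
    then have far_V: "f (V d (-3)) = 2"
      by (simp add: V_reflect)
    then have "f (U d (-3)) = 0"
      using nbr_of_two[OF V_vert far_V U_vert] d by (simp add: adj_V)
    then have "1/2 \<le> R (U d (-3))"
      using r_f_two_nbrs[of f "U d (-3)" "V d (-3)" "U d (-1)"] far_V U_two d
      by (simp add: adj_U)
    then show False
      using window_pair[OF V_in_window U_in_window, of d "-1" d "-3"] R_V d by simp
  qed
qed

text \<open>If v_{2d} and u_d both carry 0, then u_{2d} is in V_2: otherwise v_{3d} is in V_2, so u_{3d}
  carries 0 and u_d can only be dominated by u_{-d}, which is impossible.\<close>

lemma empty_side:
  assumes d: "\<bar>d\<bar> = 1" and V2_zero: "f (V d 2) = 0" and U1_zero: "f (U d 1) = 0"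
  shows "f (U d 2) = 2"
proof (rule ccontr)
  assume "f (U d 2) \<noteq> 2"
  then have V3_two: "f (V d 3) = 2"
    using outer_dominator[OF d V2_zero] by blast
  then have "f (U d 3) = 0"
    using nbr_of_two[OF V_vert V3_two U_vert] d by (simp add: adj_V)
  moreover obtain y where "gp_adj n 2 (U d 1) y" "f y = 2"
    using dominated[OF U_vert U1_zero] by blast
  ultimately have "f (U d (-1)) = 2"
    using centre_nbrs(1)[OF d] d by (auto simp: adj_U)
  then show False
    using inner_U_not_two[OF d] by blast
qed

definition side_load :: "int \<Rightarrow> real" where
  "side_load d = R (V d 1) + R (V d 2) + R (U d 1)"

lemma side_dichotomy:
  assumes d: "\<bar>d\<bar> = 1"
  shows "1/2 \<le> side_load d \<or> f (U d 2) = 2"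
proof (cases "f (V d 2) = 0 \<and> f (U d 1) = 0")
  case True
  then show ?thesis
    using empty_side[OF d] by blast
next
  case False
  have "f (U d 1) \<noteq> 2"
    using inner_U_not_two[of "- d"] d by (simp add: U_reflect)
  moreover have "1/2 \<le> R (V d 1)" if "f (V d 2) = 2"
    using r_f_two_nbrs[of f "V d 1" "V d 0" "V d 2"] that centre_nbrs(1)[OF d] f_centre d
    by (simp add: adj_V V_eq_iff)
  ultimately have "1/2 \<le> R (V d 1) \<or> 1/2 \<le> R (V d 2) \<or> 1/2 \<le> R (U d 1)"
    using False f_vals[OF V_vert[of d 2]] f_vals[OF U_vert[of d 1]] r_f_one by auto
  then have "1/2 \<le> side_load d"
    unfolding side_load_def
    using R_nonneg[OF V_vert[of d 1]] R_nonneg[OF V_vert[of d 2]] R_nonneg[OF U_vert[of d 1]]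
    by (elim disjE) linarith+
  then show ?thesis ..
qed

text \<open>The two sides and u_0 are disjoint parts of the window.\<close>

lemma window_load: "side_load 1 + side_load (- 1) + R (U 1 0) \<le> 1/2"
proof -
  let ?S = "{V 1 1, V 1 2, U 1 1, V 1 (-1), V 1 (-2), U 1 (-1), U 1 0}"
  have "?S \<subseteq> W"
    using V_in_window U_in_window by simp
  then have "sum R ?S \<le> 1/2"
    by (rule window_sum_le)
  then show ?thesis
    unfolding side_load_def by (simp add: V_reflect U_reflect V_eq_iff U_eq_iff)
qed

text \<open>The centred configuration is contradictory: every outcome of the dichotomies gives the
  window r_f-value at least 1.\<close>

theorem centre_not_two: False
proof -
  have U0_zero: "f (U 1 0) = 0"
    using centre_nbrs(2)[of 1] by simp
  have U0_load: "1/2 \<le> R (U 1 0)" if "f (U 1 e) = 2" "e = 2 \<or> e = -2" for e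
    using r_f_two_nbrs[of f "U 1 0" "V 1 0" "U 1 e" n 2] that U0_zero f_centre[of 1]
    by (auto simp: adj_U)
  have U0_load2: "1 \<le> R (U 1 0)" if "f (U 1 2) = 2" "f (U 1 (-2)) = 2"
    using r_f_three_nbrs[of f "U 1 0" "V 1 0" "U 1 2" "U 1 (-2)" n 2] that U0_zero f_centre[of 1]
    by (simp add: adj_U U_eq_iff)
  have load_nonneg: "0 \<le> side_load d" for d
    unfolding side_load_def using R_nonneg[OF V_vert] R_nonneg[OF U_vert] by (simp add: add_nonneg_nonneg)
  have right: "1/2 \<le> side_load 1 \<or> f (U 1 2) = 2"
    using side_dichotomy[of 1] by simp
  have left: "1/2 \<le> side_load (- 1) \<or> f (U 1 (-2)) = 2"
    using side_dichotomy[of "- 1"] by (simp add: U_reflect)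
  have "1 \<le> side_load 1 + side_load (- 1) + R (U 1 0)"
  proof (cases "f (U 1 2) = 2"; cases "f (U 1 (-2)) = 2")
    assume "f (U 1 2) = 2" "f (U 1 (-2)) = 2"
    then show ?thesis using U0_load2 load_nonneg[of 1] load_nonneg[of "- 1"] by linarith
  next
    assume "f (U 1 2) = 2" "f (U 1 (-2)) \<noteq> 2"
    then show ?thesis using U0_load[of 2] left load_nonneg[of 1] by auto
  next
    assume "f (U 1 2) \<noteq> 2" "f (U 1 (-2)) = 2"
    then show ?thesis using U0_load[of "-2"] right load_nonneg[of "- 1"] by auto
  next
    assume "f (U 1 2) \<noteq> 2" "f (U 1 (-2)) \<noteq> 2"
    then show ?thesis using left right R_nonneg[OF U_vert, of 1 0] by auto
  qed
  then show False
    using window_load by linarith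
qed

end

theorem lemma2p5:
  fixes n :: nat and f :: "gpv \<Rightarrow> nat" and i :: int
  assumes "n \<ge> 5"
    and "is_RDF n 2 f"
    and "rdf_weight n f = gammaR n 2"
    and "\<forall>g. is_RDF n 2 g \<and> rdf_weight n g = gammaR n 2 \<longrightarrow>
               card (Vset n f 2) \<le> card (Vset n g 2)"
    and "r_f_set n 2 f (Vprime n i 7) \<le> 0.5"
  shows "Vo (nat ((i + 3) mod int n)) \<notin> Vset n f 2"
proof
  assume "Vo (nat ((i + 3) mod int n)) \<in> Vset n f 2"
  then have "f (vo n (i + 3)) = 2"
    by (simp add: Vset_def vo_def)
  moreover have "min_V2_RDF n 2 f"
    using assms(2-4) unfolding min_V2_RDF_def by blast
  ultimately interpret centred_window n f "i + 3"
    using assms(1,5) by unfold_locales simp_all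
  show False
    by (rule centre_not_two)
qed

end
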